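(* Let $\alpha>0$, $\beta\in\mathbb{R}$ with $0\le|\beta|<\alpha$, $\mu\in\mathbb{R}$, $\delta>0$, and set $\gamma=\sqrt{\alpha^2-\beta^2}$. Let $F(x;\alpha,\beta,\mu,\delta)$ denote the cumulative distribution function of the normal inverse Gaussian distribution with these parameters. Then for every $x\in\mathbb{R}$ with $x-\mu>0$, \[ F(x;\alpha,\beta,\mu,\delta)=1-\frac{\delta e^{\delta\gamma}}{\pi}\int_0^{\infty}E_1\!\left((x-\mu)\left(\sqrt{t^2+\alpha^2}-\beta\right)\right)\cos(\delta t)\,dt , \] where $E_1(z)=\int_z^\infty \frac{e^{-s}}{s}\,ds$ is the exponential integral.
   Context: The normal inverse Gaussian (NIG) distribution with parameters $\alpha>0$, $0\le|\beta|<\alpha$, $\mu\in\mathbb{R}$, $\delta>0$ has density $f(x;\alpha,\beta,\mu,\delta)=\frac{\alpha\delta}{\pi}\frac{K_1\left(\alpha\sqrt{\delta^2+(x-\mu)^2}\right)}{\sqrt{\delta^2+(x-\mu)^2}}e^{\delta\gamma+\beta(x-\mu)}$, $x\in\mathbb{R}$, where $\gamma=\sqrt{\alpha^2-\beta^2}$, and its cumulative distribution function is $F(x;\alpha,\beta,\mu,\delta)=\int_{-\infty}^x f(t;\alpha,\beta,\mu,\delta)\,dt$. Here $K_1$ denotes the modified Bessel function of the second kind of order $1$. *)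

theory Defs
  imports "HOL-Analysis.Analysis"
begin

text \<open>Modified Bessel function of the second kind of order 1, for real argument z > 0,
  via the standard integral representation K_1(z) = int_0^infty exp(-z cosh t) cosh t dt.\<close>
definition BesselK1 :: "real \<Rightarrow> real" where
  "BesselK1 z = (LBINT t:{0..}. exp (- z * cosh t) * cosh t)"

definition expint_E1 :: "real \<Rightarrow> real" where
  "expint_E1 z = (LBINT s:{z..}. exp (- s) / s)"

definition nig_pdf :: "real \<Rightarrow> real \<Rightarrow> real \<Rightarrow> real \<Rightarrow> real \<Rightarrow> real" where
  "nig_pdf \<alpha> \<beta> \<mu> \<delta> x =
     (let q = sqrt (\<delta>\<^sup>2 + (x - \<mu>)\<^sup>2); \<gamma> = sqrt (\<alpha>\<^sup>2 - \<beta>\<^sup>2) in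
      \<alpha> * \<delta> / pi * (BesselK1 (\<alpha> * q) / q) * exp (\<delta> * \<gamma> + \<beta> * (x - \<mu>)))"

definition nig_cdf :: "real \<Rightarrow> real \<Rightarrow> real \<Rightarrow> real \<Rightarrow> real \<Rightarrow> real" where
  "nig_cdf \<alpha> \<beta> \<mu> \<delta> x = (LBINT t:{..x}. nig_pdf \<alpha> \<beta> \<mu> \<delta> t)"

end

(*
  The key identity is the cosine transform
    int_R exp (-y sqrt (t^2 + alpha^2)) cos (delta t) dt = 2 alpha y K_1 (alpha q) / q,   q = sqrt (delta^2 + y^2).
  It follows by subordination: exp (-y sqrt A) is a mixture over s > 0 of the Gaussians exp (-A s) against
  the Levy kernel y s^(-3/2) exp (-y^2 / (4 s)); the Gaussians have explicit cosine transforms, and what is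
  left in s is the kernel int exp (-A s - B / s) s^(-2) ds of K_1.  Hence for u > 0 the density at mu + u is
  delta exp (delta gamma) / (2 pi) times int exp (-u (sqrt (t^2 + alpha^2) - beta)) / u cos (delta t) dt,
  and integrating u over (x - mu, infinity) with Fubini produces E_1 in the inner integral.  Since
  F = 1 - (right tail), the density must also have total mass 1; this comes from its representation as a
  normal variance-mean mixture with an inverse Gaussian mixing density.  The Levy integral
  int_0^infty exp (-a t - b / t) t^(-3/2) dt = sqrt (pi / b) exp (-2 sqrt (a b)) is obtained from the
  substitution w = sqrt (b / t) - sqrt (a t), which maps (0, infinity) onto R with w^2 = a t + b / t - 2 sqrt (a b).
*)
theory Submission
  imports Defs "HOL-Probability.Probability"
begin

lemma has_bochner_integral_gaussian:
  fixes b c :: real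
  assumes c: "c > 0"
  shows "has_bochner_integral lborel (\<lambda>y. exp (b * y - c * y\<^sup>2)) (sqrt (pi / c) * exp (b\<^sup>2 / (4 * c)))"
proof -
  define \<sigma> where "\<sigma> = sqrt (1 / (2 * c))"
  have \<sigma>: "\<sigma> > 0" "2 * \<sigma>\<^sup>2 = 1 / c"
    using c by (auto simp: \<sigma>_def)
  have "exp (b * y - c * y\<^sup>2) =
      (sqrt (pi / c) * exp (b\<^sup>2 / (4 * c))) * normal_density (b / (2 * c)) \<sigma> y" for y
  proof -
    have "b * y - c * y\<^sup>2 = b\<^sup>2 / (4 * c) + (- c * (y - b / (2 * c))\<^sup>2)"
      using c by (simp add: field_simps power2_eq_square)
    also have "- c * (y - b / (2 * c))\<^sup>2 = - (y - b / (2 * c))\<^sup>2 / (2 * \<sigma>\<^sup>2)"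
      using \<sigma>(2) by simp
    finally have "exp (b * y - c * y\<^sup>2) =
        exp (b\<^sup>2 / (4 * c)) * exp (- (y - b / (2 * c))\<^sup>2 / (2 * \<sigma>\<^sup>2))"
      by (simp add: exp_add[symmetric])
    moreover have "sqrt (2 * pi * \<sigma>\<^sup>2) = sqrt (pi / c)"
      using \<sigma>(2) by (simp add: field_simps)
    ultimately show ?thesis
      using c by (simp add: normal_density_def)
  qed
  moreover have "has_bochner_integral lborel
      (\<lambda>y. (sqrt (pi / c) * exp (b\<^sup>2 / (4 * c))) * normal_density (b / (2 * c)) \<sigma> y)
      ((sqrt (pi / c) * exp (b\<^sup>2 / (4 * c))) * 1)"
    using \<sigma>(1) by (intro has_bochner_integral_mult_right) (simp add: has_bochner_integral_iff)
  ultimately show ?thesis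
    by simp
qed

lemma has_bochner_integral_std_normal_density_cos:
  "has_bochner_integral lborel (\<lambda>x. std_normal_density x * cos (t * x)) (exp (- t\<^sup>2 / 2))"
proof -
  interpret real_distribution std_normal_distribution
    by (rule real_dist_normal_dist)
  have "integrable std_normal_distribution (\<lambda>x. iexp (t * x))"
    by (rule integrable_iexp) auto
  then have int: "integrable lborel (\<lambda>x. std_normal_density x *\<^sub>R iexp (t * x))"
    by (subst (asm) integrable_density) auto
  have "char std_normal_distribution t = (CLINT x|lborel. std_normal_density x *\<^sub>R iexp (t * x))"
    unfolding char_def by (subst integral_density) auto
  then have "exp (- t\<^sup>2 / 2) = Re (CLINT x|lborel. std_normal_density x *\<^sub>R iexp (t * x))"
    by (metis Re_complex_of_real char_std_normal_distribution)
  also have "\<dots> = (LINT x|lborel. Re (std_normal_density x *\<^sub>R iexp (t * x)))"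
    using integral_Re[OF int] by (rule sym)
  also have "\<dots> = (LINT x|lborel. std_normal_density x * cos (t * x))"
    by (simp add: Re_exp)
  finally have "(LINT x|lborel. std_normal_density x * cos (t * x)) = exp (- t\<^sup>2 / 2)" ..
  moreover have "integrable lborel (\<lambda>x. std_normal_density x * cos (t * x))"
    using integrable_Re[OF int] by (simp add: Re_exp)
  ultimately show ?thesis
    by (simp add: has_bochner_integral_iff)
qed

lemma has_bochner_integral_gaussian_cos:
  fixes a d :: real
  assumes a: "a > 0"
  shows "has_bochner_integral lborel (\<lambda>x. exp (- a * x\<^sup>2) * cos (d * x))
           (sqrt (pi / a) * exp (- d\<^sup>2 / (4 * a)))"
proof -
  define c where "c = sqrt (2 * a)"
  have c: "c > 0" "c\<^sup>2 = 2 * a"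
    using a by (auto simp: c_def)
  have "has_bochner_integral lborel
      (\<lambda>x. std_normal_density (0 + c * x) * cos (d / c * (0 + c * x))) (exp (- (d / c)\<^sup>2 / 2) /\<^sub>R \<bar>c\<bar>)"
    by (rule lborel_has_bochner_integral_real_affine_iff[THEN iffD1,
          OF _ has_bochner_integral_std_normal_density_cos]) (use c in simp)
  then have "has_bochner_integral lborel
      (\<lambda>x. sqrt (2 * pi) * (std_normal_density (0 + c * x) * cos (d / c * (0 + c * x))))
      (sqrt (2 * pi) * (exp (- (d / c)\<^sup>2 / 2) /\<^sub>R \<bar>c\<bar>))"
    by (rule has_bochner_integral_mult_right)
  moreover have "sqrt (2 * pi) * (std_normal_density (0 + c * x) * cos (d / c * (0 + c * x))) =
      exp (- a * x\<^sup>2) * cos (d * x)" for x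
  proof -
    have "(c * x)\<^sup>2 / 2 = a * x\<^sup>2"
      using c by (simp add: power_mult_distrib)
    then show ?thesis
      using c by (simp add: std_normal_density_def)
  qed
  moreover have "sqrt (2 * pi) * (exp (- (d / c)\<^sup>2 / 2) /\<^sub>R \<bar>c\<bar>) = sqrt (pi / a) * exp (- d\<^sup>2 / (4 * a))"
  proof -
    have "(d / c)\<^sup>2 / 2 = d\<^sup>2 / (4 * a)"
      using c by (simp add: power_divide)
    then have "sqrt (2 * pi) * (exp (- (d / c)\<^sup>2 / 2) /\<^sub>R \<bar>c\<bar>) = sqrt (2 * pi) / c * exp (- d\<^sup>2 / (4 * a))"
      using c by (simp add: field_simps)
    also have "sqrt (2 * pi) / c = sqrt (pi / a)"
      using a unfolding c_def by (simp add: real_sqrt_divide[symmetric])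
    finally show ?thesis .
  qed
  ultimately show ?thesis
    by simp
qed

lemma borel_measurable_indicator_times_continuous_on:
  fixes f :: "real \<Rightarrow> real"
  assumes "S \<in> sets borel" "continuous_on S f"
  shows "(\<lambda>x. indicator S x * f x) \<in> borel_measurable borel"
  using borel_measurable_continuous_on_indicator[OF assms] by simp

lemma has_bochner_integral_indicator_iff_absolutely_integrable:
  fixes f :: "real \<Rightarrow> real"
  assumes m: "(\<lambda>x. indicator S x * f x) \<in> borel_measurable borel"
  shows "has_bochner_integral lborel (\<lambda>x. indicator S x * f x) I \<longleftrightarrow>
    f absolutely_integrable_on S \<and> integral S f = I"
proof -
  have "has_bochner_integral lborel (\<lambda>x. indicator S x * f x) I \<longleftrightarrow>
      has_bochner_integral lebesgue (\<lambda>x. indicator S x * f x) I"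
    using m by (simp add: has_bochner_integral_iff integrable_completion integral_completion)
  also have "\<dots> \<longleftrightarrow> f absolutely_integrable_on S \<and> (LINT x:S|lebesgue. f x) = I"
    by (simp add: has_bochner_integral_iff set_integrable_def set_lebesgue_integral_def)
  also have "\<dots> \<longleftrightarrow> f absolutely_integrable_on S \<and> integral S f = I"
    using set_lebesgue_integral_eq_integral(2) by metis
  finally show ?thesis .
qed

lemma has_bochner_integral_change_of_variables:
  fixes f g g' :: "real \<Rightarrow> real"
  assumes S: "S \<in> sets borel"
    and der: "\<And>x. x \<in> S \<Longrightarrow> (g has_field_derivative g' x) (at x within S)"
    and inj: "inj_on g S"
    and m_lhs: "(\<lambda>x. indicator S x * (\<bar>g' x\<bar> * f (g x))) \<in> borel_measurable borel"
    and m_rhs: "(\<lambda>y. indicator (g ` S) y * f y) \<in> borel_measurable borel"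
  shows "has_bochner_integral lborel (\<lambda>x. indicator S x * (\<bar>g' x\<bar> * f (g x))) I \<longleftrightarrow>
    has_bochner_integral lborel (\<lambda>y. indicator (g ` S) y * f y) I"
proof -
  have "S \<in> sets lebesgue"
    using S by (simp add: sets_completionI_sets)
  then show ?thesis
    using has_absolute_integral_change_of_variables_1'[OF _ der inj]
    by (simp add: has_bochner_integral_indicator_iff_absolutely_integrable[OF m_lhs]
        has_bochner_integral_indicator_iff_absolutely_integrable[OF m_rhs])
qed

lemma has_bochner_integral_exp_half_line:
  fixes a c :: real
  assumes a: "a > 0"
  shows "has_bochner_integral lborel (\<lambda>x. indicator {c..} x * exp (- a * x)) (exp (- a * c) / a)"
proof -
  have hk: "((\<lambda>x. exp (- a * x)) has_integral exp (- a * c) / a) {c..}"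
    using has_integral_exp_minus_to_infinity[OF a] by simp
  then have "(\<lambda>x. exp (- a * x)) absolutely_integrable_on {c..}"
    by (intro nonnegative_absolutely_integrable_1) (auto simp: integrable_on_def)
  moreover have "(\<lambda>x. indicator {c..} x * exp (- a * x)) \<in> borel_measurable borel"
    by (intro borel_measurable_indicator_times_continuous_on continuous_intros) auto
  ultimately show ?thesis
    using hk by (simp add: has_bochner_integral_indicator_iff_absolutely_integrable integral_unique)
qed

lemma has_bochner_integral_half_line_even:
  fixes \<phi> :: "real \<Rightarrow> real"
  assumes int: "integrable lborel \<phi>" and even: "\<And>x. \<phi> (- x) = \<phi> x"
  shows "has_bochner_integral lborel (\<lambda>x. indicator {0..} x * \<phi> x) (integral\<^sup>L lborel \<phi> / 2)"
proof -
  have i1: "integrable lborel (\<lambda>x. indicator {0..} x * \<phi> x)"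
    using integrable_mult_indicator[of "{0..}" lborel \<phi>] int by simp
  have i2: "integrable lborel (\<lambda>x. indicator {..<0} x * \<phi> x)"
    using integrable_mult_indicator[of "{..<0}" lborel \<phi>] int by simp
  have "integral\<^sup>L lborel \<phi> =
      integral\<^sup>L lborel (\<lambda>x. indicator {0..} x * \<phi> x + indicator {..<0} x * \<phi> x)"
    by (intro Bochner_Integration.integral_cong) (auto simp: indicator_def)
  also have "\<dots> = integral\<^sup>L lborel (\<lambda>x. indicator {0..} x * \<phi> x) +
      integral\<^sup>L lborel (\<lambda>x. indicator {..<0} x * \<phi> x)"
    using i1 i2 by simp
  also have "integral\<^sup>L lborel (\<lambda>x. indicator {..<0} x * \<phi> x) =
      integral\<^sup>L lborel (\<lambda>x. indicator {..<0} (0 + (-1) * x) * \<phi> (0 + (-1) * x))"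
    using lborel_integral_real_affine[of "-1" "\<lambda>x. indicator {..<0} x * \<phi> x" 0] by simp
  also have "\<dots> = integral\<^sup>L lborel (\<lambda>x. indicator {0..} x * \<phi> x)"
  proof (rule integral_cong_AE)
    show "AE x in lborel. indicator {..<0} (0 + (-1) * x) * \<phi> (0 + (-1) * x) = indicator {0..} x * \<phi> x"
      using AE_lborel_singleton[of "0::real"] by eventually_elim (auto simp: indicator_def even)
  qed (use int in \<open>auto simp: borel_measurable_integrable\<close>)
  finally have "integral\<^sup>L lborel \<phi> = 2 * integral\<^sup>L lborel (\<lambda>x. indicator {0..} x * \<phi> x)"
    by simp
  with i1 show ?thesis
    by (simp add: has_bochner_integral_iff)
qed

lemma has_bochner_integral_expint_E1:
  fixes y0 h :: real
  assumes y0: "y0 > 0" and h: "h > 0"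
  shows "has_bochner_integral lborel (\<lambda>u. indicator {y0<..} u * (exp (- u * h) / u)) (expint_E1 (y0 * h))"
proof -
  define z where "z = y0 * h"
  have z: "z > 0"
    using y0 h by (simp add: z_def)
  define \<phi> where "\<phi> s = indicator {z..} s * (exp (- s) / s)" for s :: real
  have "integrable lborel \<phi>"
  proof (rule Bochner_Integration.integrable_bound)
    show "integrable lborel (\<lambda>s. 1 / z * (indicator {z..} s * exp (- 1 * s)))"
      using has_bochner_integral_exp_half_line[of 1 z] by (simp add: has_bochner_integral_iff)
    show "\<phi> \<in> borel_measurable lborel"
      unfolding \<phi>_def measurable_lborel2
      by (intro borel_measurable_indicator_times_continuous_on continuous_intros) (use z in auto)
    have "exp (- s) / s \<le> exp (- s) / z" if "s \<ge> z" for s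
      using that z by (intro divide_left_mono) auto
    then show "AE s in lborel. norm (\<phi> s) \<le> norm (1 / z * (indicator {z..} s * exp (- 1 * s)))"
      using z by (intro AE_I2) (auto simp: \<phi>_def indicator_def)
  qed
  moreover have "expint_E1 z = integral\<^sup>L lborel \<phi>"
    unfolding expint_E1_def \<phi>_def set_lebesgue_integral_def by simp
  ultimately have "has_bochner_integral lborel \<phi> (expint_E1 z)"
    by (simp add: has_bochner_integral_iff)
  then have "has_bochner_integral lborel (\<lambda>u. \<phi> (0 + h * u)) (expint_E1 z /\<^sub>R \<bar>h\<bar>)"
    by (rule lborel_has_bochner_integral_real_affine_iff[THEN iffD1, rotated]) (use h in simp)
  then have "has_bochner_integral lborel (\<lambda>u. h * \<phi> (0 + h * u)) (h * (expint_E1 z /\<^sub>R \<bar>h\<bar>))"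
    by (rule has_bochner_integral_mult_right)
  moreover have "h * (expint_E1 z /\<^sub>R \<bar>h\<bar>) = expint_E1 z"
    using h by simp
  moreover have "(\<lambda>u. h * \<phi> (0 + h * u)) = (\<lambda>u. indicator {y0..} u * (exp (- u * h) / u))"
    using h y0 by (auto simp: \<phi>_def z_def indicator_def mult.commute)
  ultimately have closed: "has_bochner_integral lborel (\<lambda>u. indicator {y0..} u * (exp (- u * h) / u)) (expint_E1 z)"
    by (simp only:)
  have "AE u in lborel. indicator {y0..} u * (exp (- u * h) / u) = indicator {y0<..} u * (exp (- u * h) / u)"
    using AE_lborel_singleton[of y0] by eventually_elim (auto simp: indicator_def)
  moreover have "(\<lambda>u. indicator {y0<..} u * (exp (- u * h) / u)) \<in> borel_measurable lborel"
    unfolding measurable_lborel2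
    by (intro borel_measurable_indicator_times_continuous_on continuous_intros) (use y0 in auto)
  moreover have "(\<lambda>u. indicator {y0..} u * (exp (- u * h) / u)) \<in> borel_measurable lborel"
    using closed by (intro borel_measurable_integrable integrable.intros)
  ultimately show ?thesis
    using closed has_bochner_integral_cong_AE unfolding z_def by blast
qed

lemma exists_pos_root_quadratic:
  fixes p q y :: real
  assumes p: "p > 0" and q: "q > 0"
  shows "\<exists>r>0. p * r\<^sup>2 + y * r = q"
proof -
  define D where "D = sqrt (y\<^sup>2 + 4 * p * q)"
  define r where "r = (D - y) / (2 * p)"
  have "sqrt (y\<^sup>2) < D"
    using p q unfolding D_def by (intro real_sqrt_less_mono) simp
  then have "r > 0"
    using p unfolding r_def by (intro divide_pos_pos) auto
  have D: "D\<^sup>2 = y\<^sup>2 + 4 * p * q"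
    using p q unfolding D_def by (intro real_sqrt_pow2) simp
  have r2: "2 * p * r = D - y"
    using p unfolding r_def by simp
  have "4 * p * (p * r\<^sup>2 + y * r) = (2 * p * r)\<^sup>2 + 2 * y * (2 * p * r)"
    by (simp add: power2_eq_square algebra_simps)
  also have "\<dots> = D\<^sup>2 - y\<^sup>2"
    unfolding r2 by (simp add: power2_eq_square algebra_simps)
  also have "\<dots> = 4 * p * q"
    using D by simp
  finally have "p * r\<^sup>2 + y * r = q"
    using p by simp
  with \<open>r > 0\<close> show ?thesis
    by blast
qed

lemma levy_substitution_bij_betw:
  fixes a b :: real
  assumes a: "a > 0" and b: "b > 0"
  shows "bij_betw (\<lambda>t. sqrt b / sqrt t - sqrt a * sqrt t) {0<..} UNIV"
proof (rule bij_betw_imageI)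
  let ?w = "\<lambda>t. sqrt b / sqrt t - sqrt a * sqrt t"
  have decreasing: "?w t < ?w s" if "0 < s" "s < t" for s t
  proof -
    have "sqrt s < sqrt t" "sqrt s > 0"
      using that by simp_all
    then have "sqrt b / sqrt t < sqrt b / sqrt s"
      using b by (simp add: frac_less2)
    moreover have "sqrt a * sqrt s < sqrt a * sqrt t"
      using a \<open>sqrt s < sqrt t\<close> by simp
    ultimately show ?thesis
      by simp
  qed
  show "inj_on ?w {0<..}"
  proof (rule inj_onI)
    fix s t :: real
    assume "s \<in> {0<..}" "t \<in> {0<..}" "?w s = ?w t"
    then show "s = t"
      using decreasing[of s t] decreasing[of t s] by (cases s t rule: linorder_cases) auto
  qed
  show "?w ` {0<..} = UNIV"
  proof (intro set_eqI iffI)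
    fix y :: real
    obtain r where r: "r > 0" "sqrt a * r\<^sup>2 + y * r = sqrt b"
      using exists_pos_root_quadratic[of "sqrt a" "sqrt b" y] a b by auto
    then have "?w (r\<^sup>2) = y"
      by (simp add: field_simps power2_eq_square)
    then show "y \<in> ?w ` {0<..}"
      using r by (intro image_eqI[where x = "r\<^sup>2"]) simp_all
  qed auto
qed

lemma has_bochner_integral_levy_kernel_sum:
  fixes a b :: real
  assumes a: "a > 0" and b: "b > 0"
  shows "has_bochner_integral lborel
    (\<lambda>t. indicator {0<..} t * (exp (- a * t - b / t) * (sqrt b / (2 * t * sqrt t) + sqrt a / (2 * sqrt t))))
    (sqrt pi * exp (- 2 * sqrt (a * b)))"
proof -
  define w where "w t = sqrt b / sqrt t - sqrt a * sqrt t" for t :: real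
  define w' where "w' t = - (sqrt b / (2 * t * sqrt t) + sqrt a / (2 * sqrt t))" for t :: real
  have der: "(w has_field_derivative w' t) (at t within {0<..})" if "t \<in> {0<..}" for t
    using that unfolding w_def w'_def
    by (auto intro!: derivative_eq_intros simp: field_simps power2_eq_square)
  have bij: "inj_on w {0<..}" "w ` {0<..} = UNIV"
    using levy_substitution_bij_betw[OF a b] by (simp_all add: bij_betw_def w_def[abs_def])
  have m_lhs: "(\<lambda>t. indicator {0<..} t * (\<bar>w' t\<bar> * exp (- (w t)\<^sup>2))) \<in> borel_measurable borel"
    unfolding w_def w'_def
    by (intro borel_measurable_indicator_times_continuous_on continuous_intros) auto
  have m_rhs: "(\<lambda>y. indicator (w ` {0<..}) y * exp (- y\<^sup>2)) \<in> borel_measurable borel"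
    unfolding bij(2) by (intro borel_measurable_indicator_times_continuous_on continuous_intros) auto
  have "has_bochner_integral lborel (\<lambda>y. indicator (w ` {0<..}) y * exp (- y\<^sup>2)) (sqrt pi)"
    using has_bochner_integral_gaussian[of 1 0] bij(2) by simp
  then have gauss: "has_bochner_integral lborel
      (\<lambda>t. indicator {0<..} t * (\<bar>w' t\<bar> * exp (- (w t)\<^sup>2))) (sqrt pi)"
    using has_bochner_integral_change_of_variables[where f = "\<lambda>y. exp (- y\<^sup>2)", OF _ der bij(1) m_lhs m_rhs]
    by simp
  have eq: "indicator {0<..} t * (\<bar>w' t\<bar> * exp (- (w t)\<^sup>2)) = exp (2 * sqrt (a * b)) *
      (indicator {0<..} t * (exp (- a * t - b / t) * (sqrt b / (2 * t * sqrt t) + sqrt a / (2 * sqrt t))))"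
    for t
  proof (cases "t > 0")
    case True
    have "(w t)\<^sup>2 = b / t + a * t - 2 * sqrt (a * b)"
      using True a b unfolding w_def by (simp add: power2_eq_square field_simps real_sqrt_mult)
    then have "exp (- (w t)\<^sup>2) = exp (2 * sqrt (a * b)) * exp (- a * t - b / t)"
      by (simp add: exp_add[symmetric])
    moreover have "sqrt b / (2 * t * sqrt t) + sqrt a / (2 * sqrt t) \<ge> 0"
      using True a b by simp
    then have "\<bar>w' t\<bar> = sqrt b / (2 * t * sqrt t) + sqrt a / (2 * sqrt t)"
      unfolding w'_def by (simp only: abs_minus_cancel abs_of_nonneg)
    ultimately show ?thesis
      using True by simp
  qed simp
  have "has_bochner_integral lborel
      (\<lambda>t. exp (- 2 * sqrt (a * b)) * (indicator {0<..} t * (\<bar>w' t\<bar> * exp (- (w t)\<^sup>2))))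
      (exp (- 2 * sqrt (a * b)) * sqrt pi)"
    using gauss by (rule has_bochner_integral_mult_right)
  moreover have "(\<lambda>t. exp (- 2 * sqrt (a * b)) * (indicator {0<..} t * (\<bar>w' t\<bar> * exp (- (w t)\<^sup>2)))) =
      (\<lambda>t. indicator {0<..} t * (exp (- a * t - b / t) * (sqrt b / (2 * t * sqrt t) + sqrt a / (2 * sqrt t))))"
    unfolding eq by (simp add: mult.assoc[symmetric] exp_add[symmetric])
  moreover have "exp (- 2 * sqrt (a * b)) * sqrt pi = sqrt pi * exp (- 2 * sqrt (a * b))"
    by (rule mult.commute)
  ultimately show ?thesis
    by (simp only:)
qed

lemma has_bochner_integral_half_line_inversion:
  fixes f :: "real \<Rightarrow> real" and c :: real
  assumes c: "c > 0" and f: "continuous_on {0<..} f"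
  shows "has_bochner_integral lborel (\<lambda>u. indicator {0<..} u * (c / u\<^sup>2 * f (c / u))) I \<longleftrightarrow>
    has_bochner_integral lborel (\<lambda>t. indicator {0<..} t * f t) I"
proof -
  let ?g = "\<lambda>u. c / u" and ?g' = "\<lambda>u. - c / u\<^sup>2"
  have der: "(?g has_field_derivative ?g' u) (at u within {0<..})" if "u \<in> {0<..}" for u
    using that by (auto intro!: derivative_eq_intros simp: power2_eq_square)
  have inj: "inj_on ?g {0<..}"
    using c by (auto intro!: inj_onI simp: field_simps)
  have img: "?g ` {0<..} = {0<..}"
  proof (intro set_eqI iffI)
    fix x :: real
    assume "x \<in> {0<..}"
    then have "x = ?g (c / x)" "c / x \<in> {0<..}"
      using c by auto
    then show "x \<in> ?g ` {0<..}"
      by blast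
  qed (use c in auto)
  have "continuous_on {0<..} (\<lambda>u. \<bar>?g' u\<bar> * f (?g u))"
    using c by (intro continuous_intros continuous_on_compose2[OF f]) auto
  then have m_lhs: "(\<lambda>u. indicator {0<..} u * (\<bar>?g' u\<bar> * f (?g u))) \<in> borel_measurable borel"
    by (intro borel_measurable_indicator_times_continuous_on) auto
  have m_rhs: "(\<lambda>t. indicator (?g ` {0<..}) t * f t) \<in> borel_measurable borel"
    unfolding img using f by (intro borel_measurable_indicator_times_continuous_on) auto
  have "\<bar>?g' u\<bar> = c / u\<^sup>2" for u
    using c by simp
  then show ?thesis
    using has_bochner_integral_change_of_variables[where f = f and I = I, OF _ der inj m_lhs m_rhs] c
    by (simp add: img)
qed

lemma has_bochner_integral_levy_kernel_inversion:
  fixes a b J :: real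
  assumes a: "a > 0" and b: "b > 0"
    and J: "has_bochner_integral lborel (\<lambda>t. indicator {0<..} t * (exp (- a * t - b / t) / (t * sqrt t))) J"
  shows "has_bochner_integral lborel (\<lambda>t. indicator {0<..} t * (exp (- a * t - b / t) / sqrt t)) (sqrt (b / a) * J)"
proof -
  define E where "E t = exp (- a * t - b / t)" for t :: real
  define c where "c = b / a"
  have c: "c > 0"
    using a b by (simp add: c_def)
  have inverted: "indicator {0<..} u * (c / u\<^sup>2 * (E (c / u) / (c / u * sqrt (c / u)))) =
      indicator {0<..} u * (E u / sqrt u / sqrt c)" for u
  proof (cases "u > 0")
    case True
    have "E (c / u) = E u"
      unfolding E_def c_def using a b True by (simp add: field_simps)
    moreover have "sqrt (c / u) = sqrt c / sqrt u"
      by (simp add: real_sqrt_divide)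
    ultimately have "c / u\<^sup>2 * (E (c / u) / (c / u * sqrt (c / u))) =
        c / u\<^sup>2 * (E u / (c / u * (sqrt c / sqrt u)))"
      by simp
    also have "\<dots> = E u * (sqrt u / u) / sqrt c"
      using c True by (simp add: field_simps power2_eq_square)
    also have "\<dots> = E u / sqrt u / sqrt c"
      using True by (subst sqrt_divide_self_eq) (simp_all add: divide_inverse)
    finally show ?thesis
      by simp
  qed simp
  have "continuous_on {0<..} (\<lambda>t. E t / (t * sqrt t))"
    unfolding E_def by (intro continuous_intros) auto
  then have "has_bochner_integral lborel (\<lambda>u. indicator {0<..} u * (E u / sqrt u / sqrt c)) J"
    using has_bochner_integral_half_line_inversion[OF c, where f = "\<lambda>t. E t / (t * sqrt t)" and I = J]
      J[folded E_def]
    unfolding inverted by simp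
  then have "has_bochner_integral lborel (\<lambda>u. sqrt c * (indicator {0<..} u * (E u / sqrt u / sqrt c))) (sqrt c * J)"
    by (rule has_bochner_integral_mult_right)
  then show ?thesis
    using a b unfolding E_def c_def by simp
qed

lemma has_bochner_integral_levy_kernel:
  fixes a b :: real
  assumes a: "a > 0" and b: "b > 0"
  shows "has_bochner_integral lborel (\<lambda>t. indicator {0<..} t * (exp (- a * t - b / t) / (t * sqrt t)))
    (sqrt (pi / b) * exp (- 2 * sqrt (a * b)))"
proof -
  define E where "E t = exp (- a * t - b / t)" for t :: real
  have sum: "has_bochner_integral lborel
      (\<lambda>t. indicator {0<..} t * (E t * (sqrt b / (2 * t * sqrt t) + sqrt a / (2 * sqrt t))))
      (sqrt pi * exp (- 2 * sqrt (a * b)))"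
    unfolding E_def by (rule has_bochner_integral_levy_kernel_sum[OF a b])
  have "integrable lborel (\<lambda>t. indicator {0<..} t * (E t / (t * sqrt t)))"
  proof (rule Bochner_Integration.integrable_bound)
    show "integrable lborel (\<lambda>t. 2 / sqrt b *
        (indicator {0<..} t * (E t * (sqrt b / (2 * t * sqrt t) + sqrt a / (2 * sqrt t)))))"
      by (intro integrable_mult_right) (rule integrable.intros[OF sum])
    show "(\<lambda>t. indicator {0<..} t * (E t / (t * sqrt t))) \<in> borel_measurable lborel"
      unfolding E_def measurable_lborel2
      by (intro borel_measurable_indicator_times_continuous_on continuous_intros) auto
    have "E t / (t * sqrt t) \<le> 2 / sqrt b * (E t * (sqrt b / (2 * t * sqrt t) + sqrt a / (2 * sqrt t)))"
      if "t > 0" for t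
      using that a b by (simp add: E_def field_simps)
    then show "AE t in lborel. norm (indicator {0<..} t * (E t / (t * sqrt t))) \<le>
        norm (2 / sqrt b * (indicator {0<..} t * (E t * (sqrt b / (2 * t * sqrt t) + sqrt a / (2 * sqrt t)))))"
      using a b by (intro AE_I2) (auto simp: indicator_def E_def)
  qed
  then obtain J where J: "has_bochner_integral lborel (\<lambda>t. indicator {0<..} t * (E t / (t * sqrt t))) J"
    using has_bochner_integral_integrable by blast
  \<comment> \<open>by the inversion \<open>t \<mapsto> b / (a t)\<close>, both terms of the sum integrate to \<open>sqrt b * J / 2\<close>\<close>
  have "has_bochner_integral lborel
      (\<lambda>t. sqrt b / 2 * (indicator {0<..} t * (E t / (t * sqrt t))) + sqrt a / 2 * (indicator {0<..} t * (E t / sqrt t)))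
      (sqrt b / 2 * J + sqrt a / 2 * (sqrt (b / a) * J))"
    using J has_bochner_integral_levy_kernel_inversion[OF a b J[unfolded E_def]] unfolding E_def
    by (intro has_bochner_integral_add has_bochner_integral_mult_right)
  moreover have "sqrt b / 2 * (indicator {0<..} t * (E t / (t * sqrt t))) + sqrt a / 2 * (indicator {0<..} t * (E t / sqrt t)) =
      indicator {0<..} t * (E t * (sqrt b / (2 * t * sqrt t) + sqrt a / (2 * sqrt t)))" for t
    by (simp add: algebra_simps)
  moreover have "sqrt b / 2 * J + sqrt a / 2 * (sqrt (b / a) * J) = sqrt b * J"
    using a b by (simp add: real_sqrt_divide field_simps)
  ultimately have "has_bochner_integral lborel
      (\<lambda>t. indicator {0<..} t * (E t * (sqrt b / (2 * t * sqrt t) + sqrt a / (2 * sqrt t)))) (sqrt b * J)"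
    by simp
  then have "sqrt b * J = sqrt pi * exp (- 2 * sqrt (a * b))"
    using sum by (rule has_bochner_integral_eq)
  then have "J = sqrt (pi / b) * exp (- 2 * sqrt (a * b))"
    using b by (simp add: real_sqrt_divide field_simps)
  then show ?thesis
    using J by (simp add: E_def)
qed

lemma cosh_ge_quarter_square: "cosh (u::real) \<ge> u\<^sup>2 / 4"
proof -
  have "exp \<bar>u\<bar> \<ge> 1 + \<bar>u\<bar> + \<bar>u\<bar>\<^sup>2 / 2"
    by (rule exp_lower_Taylor_quadratic) simp
  moreover have "cosh u \<ge> exp \<bar>u\<bar> / 2"
    by (cases "u \<ge> 0") (auto simp: cosh_def)
  ultimately show ?thesis
    by simp
qed

lemma integrable_exp_minus_cosh:
  fixes z :: real
  assumes z: "z > 0"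
  shows "integrable lborel (\<lambda>u. exp (- u) * exp (- z * cosh u))"
proof (rule Bochner_Integration.integrable_bound)
  show "integrable lborel (\<lambda>u. exp ((-1) * u - z / 4 * u\<^sup>2))"
    using has_bochner_integral_gaussian[of "z / 4" "-1"] z by (simp add: has_bochner_integral_iff)
  show "(\<lambda>u. exp (- u) * exp (- z * cosh u)) \<in> borel_measurable lborel"
    unfolding measurable_lborel2 by (intro borel_measurable_continuous_onI continuous_intros)
  have "exp (- u) * exp (- z * cosh u) \<le> exp ((-1) * u - z / 4 * u\<^sup>2)" for u :: real
  proof -
    have "z * (u\<^sup>2 / 4) \<le> z * cosh u"
      using z cosh_ge_quarter_square[of u] by (intro mult_left_mono) auto
    then show ?thesis
      by (simp add: exp_add[symmetric])
  qed
  then show "AE u in lborel. norm (exp (- u) * exp (- z * cosh u)) \<le> norm (exp ((-1) * u - z / 4 * u\<^sup>2))"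
    by (intro AE_I2) simp
qed

lemma has_bochner_integral_BesselK1:
  fixes z :: real
  assumes z: "z > 0"
  shows "has_bochner_integral lborel (\<lambda>u. exp (- u) * exp (- z * cosh u)) (2 * BesselK1 z)"
proof -
  define \<psi> where "\<psi> u = exp (- u) * exp (- z * cosh u)" for u
  define \<phi> where "\<phi> u = exp (- z * cosh u) * cosh u" for u
  have int: "integrable lborel \<psi>"
    unfolding \<psi>_def by (rule integrable_exp_minus_cosh[OF z])
  have int_reflected: "integrable lborel (\<lambda>u. \<psi> (0 + (-1) * u))"
    by (rule lborel_integrable_real_affine[OF int]) simp
  have \<phi>_eq: "\<phi> u = (\<psi> u + \<psi> (0 + (-1) * u)) / 2" for u
    unfolding \<phi>_def \<psi>_def cosh_def by (simp add: field_simps)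
  have "integrable lborel \<phi>"
    unfolding \<phi>_eq using int int_reflected by simp
  moreover have "integral\<^sup>L lborel \<phi> = integral\<^sup>L lborel \<psi>"
    unfolding \<phi>_eq using int int_reflected lborel_integral_real_affine[of "-1" \<psi> 0] by simp
  moreover have "\<phi> (- u) = \<phi> u" for u
    unfolding \<phi>_def by simp
  ultimately have "has_bochner_integral lborel (\<lambda>u. indicator {0..} u * \<phi> u) (integral\<^sup>L lborel \<psi> / 2)"
    using has_bochner_integral_half_line_even[of \<phi>] by simp
  moreover have "BesselK1 z = integral\<^sup>L lborel (\<lambda>u. indicator {0..} u * \<phi> u)"
    unfolding BesselK1_def \<phi>_def set_lebesgue_integral_def by simp
  ultimately have "integral\<^sup>L lborel \<psi> = 2 * BesselK1 z"
    by (simp add: has_bochner_integral_iff)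
  then show ?thesis
    using int unfolding \<psi>_def by (simp add: has_bochner_integral_iff)
qed

lemma scaled_exp_add_inverse_eq_cosh:
  fixes A B u :: real
  assumes A: "A > 0" and B: "B > 0"
  shows "A * (sqrt (B / A) * exp u) + B / (sqrt (B / A) * exp u) = 2 * sqrt (A * B) * cosh u"
proof -
  have "A * sqrt (B / A) = sqrt A * sqrt B" and "B / sqrt (B / A) = sqrt A * sqrt B"
    using A B by (simp_all add: real_sqrt_divide field_simps)
  moreover have "B / (sqrt (B / A) * exp u) = B / sqrt (B / A) * exp (- u)"
    by (simp add: exp_minus field_simps)
  ultimately show ?thesis
    unfolding cosh_def by (simp add: real_sqrt_mult algebra_simps)
qed

lemma has_bochner_integral_BesselK1_kernel:
  fixes A B :: real
  assumes A: "A > 0" and B: "B > 0"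
  shows "has_bochner_integral lborel (\<lambda>s. indicator {0<..} s * (exp (- A * s - B / s) / s\<^sup>2))
    (2 * sqrt (A / B) * BesselK1 (2 * sqrt (A * B)))"
proof -
  define z where "z = 2 * sqrt (A * B)"
  define c where "c = sqrt (B / A)"
  have z: "z > 0" and c: "c > 0"
    using A B by (auto simp: z_def c_def)
  define f where "f s = exp (- A * s - B / s) / s\<^sup>2" for s :: real
  define g where "g u = c * exp u" for u :: real
  have der: "(g has_field_derivative g u) (at u within UNIV)" for u
    unfolding g_def by (auto intro!: derivative_eq_intros)
  have inj: "inj_on g UNIV"
    unfolding g_def using c by (auto intro!: inj_onI)
  have img: "g ` UNIV = {0<..}"
  proof (intro set_eqI iffI)
    fix x :: real
    assume "x \<in> {0<..}"
    then have "x = g (ln (x / c))"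
      unfolding g_def using c by simp
    then show "x \<in> g ` UNIV"
      by blast
  qed (use c in \<open>auto simp: g_def\<close>)
  have eq: "\<bar>g u\<bar> * f (g u) = 1 / c * (exp (- u) * exp (- z * cosh u))" for u
  proof -
    have "exp (- A * g u - B / g u) = exp (- (A * g u + B / g u))"
      by (simp add: algebra_simps)
    also have "\<dots> = exp (- z * cosh u)"
      unfolding g_def c_def z_def scaled_exp_add_inverse_eq_cosh[OF A B] by simp
    finally have "\<bar>g u\<bar> * f (g u) = exp (- z * cosh u) / g u"
      unfolding f_def using c by (simp add: g_def power2_eq_square)
    also have "\<dots> = 1 / c * (exp (- u) * exp (- z * cosh u))"
      unfolding g_def using c by (simp add: exp_minus field_simps)
    finally show ?thesis .
  qed
  have m_lhs: "(\<lambda>u. indicator UNIV u * (\<bar>g u\<bar> * f (g u))) \<in> borel_measurable borel"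
    unfolding eq by (intro borel_measurable_indicator_times_continuous_on continuous_intros) auto
  have m_rhs: "(\<lambda>s. indicator (g ` UNIV) s * f s) \<in> borel_measurable borel"
    unfolding img f_def by (intro borel_measurable_indicator_times_continuous_on continuous_intros) auto
  have "has_bochner_integral lborel (\<lambda>u. 1 / c * (exp (- u) * exp (- z * cosh u))) (1 / c * (2 * BesselK1 z))"
    by (rule has_bochner_integral_mult_right[OF has_bochner_integral_BesselK1[OF z]])
  then have "has_bochner_integral lborel (\<lambda>u. indicator UNIV u * (\<bar>g u\<bar> * f (g u))) (1 / c * (2 * BesselK1 z))"
    unfolding eq by simp
  then have "has_bochner_integral lborel (\<lambda>s. indicator {0<..} s * f s) (1 / c * (2 * BesselK1 z))"
    using has_bochner_integral_change_of_variables[where f = f, OF _ der inj m_lhs m_rhs] img by simp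
  moreover have "1 / c * (2 * BesselK1 z) = 2 * sqrt (A / B) * BesselK1 (2 * sqrt (A * B))"
    unfolding c_def z_def using A B by (simp add: real_sqrt_divide)
  ultimately show ?thesis
    unfolding f_def by simp
qed

lemma Fubini_dominated_lborel:
  fixes F H :: "real \<Rightarrow> real \<Rightarrow> real" and G :: "real \<Rightarrow> real"
  assumes mF: "(\<lambda>(x, y). F x y) \<in> borel_measurable (lborel \<Otimes>\<^sub>M lborel)"
    and mH: "(\<lambda>(x, y). H x y) \<in> borel_measurable (lborel \<Otimes>\<^sub>M lborel)"
    and bound: "\<And>x y. \<bar>F x y\<bar> \<le> H x y"
    and H: "\<And>x. has_bochner_integral lborel (H x) (G x)"
    and G: "integrable lborel G"
  shows "integrable (lborel \<Otimes>\<^sub>M lborel) (\<lambda>(x, y). F x y)"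
    and "(\<integral>y. (\<integral>x. F x y \<partial>lborel) \<partial>lborel) = (\<integral>x. (\<integral>y. F x y \<partial>lborel) \<partial>lborel)"
proof -
  have H_nonneg: "H x y \<ge> 0" for x y
    using bound[of x y] by linarith
  have "integrable (lborel \<Otimes>\<^sub>M lborel) (\<lambda>p. case_prod H p)"
  proof (rule lborel_pair.Fubini_integrable)
    show "(\<lambda>p. case_prod H p) \<in> borel_measurable (lborel \<Otimes>\<^sub>M lborel)"
      using mH by simp
    have "(\<lambda>x. \<integral>y. norm (case_prod H (x, y)) \<partial>lborel) = G"
      using H H_nonneg by (simp add: has_bochner_integral_iff fun_eq_iff)
    then show "integrable lborel (\<lambda>x. \<integral>y. norm (case_prod H (x, y)) \<partial>lborel)"
      using G by simp
    show "AE x in lborel. integrable lborel (\<lambda>y. case_prod H (x, y))"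
      using H by (simp add: has_bochner_integral_iff)
  qed
  then show int: "integrable (lborel \<Otimes>\<^sub>M lborel) (\<lambda>(x, y). F x y)"
    by (rule Bochner_Integration.integrable_bound)
       (use mF bound H_nonneg in \<open>auto intro!: AE_I2 simp: split_beta\<close>)
  show "(\<integral>y. (\<integral>x. F x y \<partial>lborel) \<partial>lborel) = (\<integral>x. (\<integral>y. F x y \<partial>lborel) \<partial>lborel)"
    by (rule lborel_pair.Fubini_integral[OF int])
qed

lemma has_bochner_integral_exp_sqrt_mixture:
  fixes A y :: real
  assumes A: "A > 0" and y: "y > 0"
  shows "has_bochner_integral lborel
    (\<lambda>s. indicator {0<..} s * (y / (2 * sqrt pi) * (exp (- A * s - y\<^sup>2 / 4 / s) / (s * sqrt s))))
    (exp (- y * sqrt A))"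
proof -
  have "has_bochner_integral lborel
      (\<lambda>s. y / (2 * sqrt pi) * (indicator {0<..} s * (exp (- A * s - y\<^sup>2 / 4 / s) / (s * sqrt s))))
      (y / (2 * sqrt pi) * (sqrt (pi / (y\<^sup>2 / 4)) * exp (- 2 * sqrt (A * (y\<^sup>2 / 4)))))"
    by (intro has_bochner_integral_mult_right has_bochner_integral_levy_kernel A) (use y in simp)
  moreover have "sqrt (pi / (y\<^sup>2 / 4)) = 2 * sqrt pi / y"
    using y by (simp add: real_sqrt_divide real_sqrt_mult)
  moreover have "2 * sqrt (A * (y\<^sup>2 / 4)) = y * sqrt A"
    using y by (simp add: real_sqrt_mult real_sqrt_divide)
  ultimately show ?thesis
    using y by (simp add: ac_simps)
qed

lemma has_bochner_integral_exp_sqrt_mixture_cos: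
  fixes \<alpha> y s d :: real
  shows "has_bochner_integral lborel
    (\<lambda>t. indicator {0<..} s * (y / (2 * sqrt pi) * (exp (- (t\<^sup>2 + \<alpha>\<^sup>2) * s - y\<^sup>2 / 4 / s) / (s * sqrt s))) *
      cos (d * t))
    (indicator {0<..} s * (y / 2 * (exp (- \<alpha>\<^sup>2 * s - (d\<^sup>2 + y\<^sup>2) / 4 / s) / s\<^sup>2)))"
proof (cases "s > 0")
  case True
  define C where "C = y / (2 * sqrt pi) * (exp (- \<alpha>\<^sup>2 * s - y\<^sup>2 / 4 / s) / (s * sqrt s))"
  have "has_bochner_integral lborel (\<lambda>t. C * (exp (- s * t\<^sup>2) * cos (d * t)))
      (C * (sqrt (pi / s) * exp (- d\<^sup>2 / (4 * s))))"
    by (intro has_bochner_integral_mult_right has_bochner_integral_gaussian_cos True)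
  moreover have "C * (exp (- s * t\<^sup>2) * cos (d * t)) = indicator {0<..} s *
      (y / (2 * sqrt pi) * (exp (- (t\<^sup>2 + \<alpha>\<^sup>2) * s - y\<^sup>2 / 4 / s) / (s * sqrt s))) * cos (d * t)" for t
    unfolding C_def using True by (simp add: exp_add[symmetric] algebra_simps)
  moreover have "C * (sqrt (pi / s) * exp (- d\<^sup>2 / (4 * s))) =
      indicator {0<..} s * (y / 2 * (exp (- \<alpha>\<^sup>2 * s - (d\<^sup>2 + y\<^sup>2) / 4 / s) / s\<^sup>2))"
  proof -
    have "sqrt s * sqrt s = s"
      using True by simp
    moreover have "exp (- \<alpha>\<^sup>2 * s - y\<^sup>2 / 4 / s) * exp (- d\<^sup>2 / (4 * s)) =
        exp (- \<alpha>\<^sup>2 * s - (d\<^sup>2 + y\<^sup>2) / 4 / s)"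
      by (simp add: exp_add[symmetric] add_divide_distrib)
    ultimately show ?thesis
      unfolding C_def using True by (simp add: real_sqrt_divide field_simps power2_eq_square)
  qed
  ultimately show ?thesis
    by simp
qed (simp add: has_bochner_integral_zero)

lemma has_bochner_integral_BesselK1_kernel_sqrt:
  fixes \<alpha> y d :: real
  assumes \<alpha>: "\<alpha> > 0" and y: "y > 0"
  shows "has_bochner_integral lborel
    (\<lambda>s. indicator {0<..} s * (y / 2 * (exp (- \<alpha>\<^sup>2 * s - (d\<^sup>2 + y\<^sup>2) / 4 / s) / s\<^sup>2)))
    (2 * \<alpha> * y * BesselK1 (\<alpha> * sqrt (d\<^sup>2 + y\<^sup>2)) / sqrt (d\<^sup>2 + y\<^sup>2))"
proof -
  define q where "q = sqrt (d\<^sup>2 + y\<^sup>2)"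
  have q: "q > 0"
    using y by (simp add: q_def add_nonneg_pos)
  have "has_bochner_integral lborel
      (\<lambda>s. y / 2 * (indicator {0<..} s * (exp (- \<alpha>\<^sup>2 * s - (d\<^sup>2 + y\<^sup>2) / 4 / s) / s\<^sup>2)))
      (y / 2 * (2 * sqrt (\<alpha>\<^sup>2 / ((d\<^sup>2 + y\<^sup>2) / 4)) * BesselK1 (2 * sqrt (\<alpha>\<^sup>2 * ((d\<^sup>2 + y\<^sup>2) / 4)))))"
    using \<alpha> y by (intro has_bochner_integral_mult_right has_bochner_integral_BesselK1_kernel)
      (auto intro: add_nonneg_pos)
  moreover have "sqrt (\<alpha>\<^sup>2 / ((d\<^sup>2 + y\<^sup>2) / 4)) = 2 * \<alpha> / q"
    and "2 * sqrt (\<alpha>\<^sup>2 * ((d\<^sup>2 + y\<^sup>2) / 4)) = \<alpha> * q"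
    unfolding q_def using \<alpha> by (simp_all add: real_sqrt_divide real_sqrt_mult)
  ultimately show ?thesis
    unfolding q_def[symmetric] using q by (simp add: mult_ac)
qed

lemma has_bochner_integral_exp_sqrt_cos:
  fixes \<alpha> y \<delta> :: real
  assumes \<alpha>: "\<alpha> > 0" and y: "y > 0"
  shows "has_bochner_integral lborel (\<lambda>t. exp (- y * sqrt (t\<^sup>2 + \<alpha>\<^sup>2)) * cos (\<delta> * t))
    (2 * \<alpha> * y * BesselK1 (\<alpha> * sqrt (\<delta>\<^sup>2 + y\<^sup>2)) / sqrt (\<delta>\<^sup>2 + y\<^sup>2))"
proof -
  define H where "H s t = indicator {0<..} s *
      (y / (2 * sqrt pi) * (exp (- (t\<^sup>2 + \<alpha>\<^sup>2) * s - y\<^sup>2 / 4 / s) / (s * sqrt s)))" for s t :: real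
  define G where "G d s = indicator {0<..} s * (y / 2 * (exp (- \<alpha>\<^sup>2 * s - (d\<^sup>2 + y\<^sup>2) / 4 / s) / s\<^sup>2))"
    for d s :: real
  define F where "F s t = H s t * cos (\<delta> * t)" for s t
  have gauss: "has_bochner_integral lborel (\<lambda>t. H s t * cos (d * t)) (G d s)" for d s
    unfolding H_def G_def by (rule has_bochner_integral_exp_sqrt_mixture_cos)
  have bessel: "has_bochner_integral lborel (G d)
      (2 * \<alpha> * y * BesselK1 (\<alpha> * sqrt (d\<^sup>2 + y\<^sup>2)) / sqrt (d\<^sup>2 + y\<^sup>2))" for d
    unfolding G_def[abs_def] using \<alpha> y by (rule has_bochner_integral_BesselK1_kernel_sqrt)
  have mH: "(\<lambda>(s, t). H s t) \<in> borel_measurable (lborel \<Otimes>\<^sub>M lborel)"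
    unfolding H_def by measurable
  have mF: "(\<lambda>(s, t). F s t) \<in> borel_measurable (lborel \<Otimes>\<^sub>M lborel)"
    unfolding F_def H_def by measurable
  have bound: "\<bar>F s t\<bar> \<le> H s t" for s t
  proof -
    have "H s t \<ge> 0"
      using y unfolding H_def by (auto simp: indicator_def)
    then show ?thesis
      unfolding F_def by (simp add: abs_mult mult_left_le)
  qed
  have H_int: "has_bochner_integral lborel (H s) (G 0 s)" for s
    using gauss[where d = 0 and s = s] by simp
  have G_int: "integrable lborel (G 0)"
    using bessel[of 0] by (simp add: has_bochner_integral_iff)
  note Fubini = Fubini_dominated_lborel[OF mF mH bound H_int G_int]
  have inner: "(\<integral>s. F s t \<partial>lborel) = exp (- y * sqrt (t\<^sup>2 + \<alpha>\<^sup>2)) * cos (\<delta> * t)" for t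
  proof -
    have "has_bochner_integral lborel (\<lambda>s. H s t) (exp (- y * sqrt (t\<^sup>2 + \<alpha>\<^sup>2)))"
      unfolding H_def using \<alpha> y by (intro has_bochner_integral_exp_sqrt_mixture) (auto intro: add_nonneg_pos)
    from has_bochner_integral_mult_left[OF this, of "cos (\<delta> * t)"] show ?thesis
      unfolding F_def by (simp add: has_bochner_integral_iff)
  qed
  have "integrable lborel (\<lambda>t. exp (- y * sqrt (t\<^sup>2 + \<alpha>\<^sup>2)) * cos (\<delta> * t))"
    using lborel_pair.integrable_snd[OF Fubini(1)] unfolding inner .
  moreover have "(\<integral>t. exp (- y * sqrt (t\<^sup>2 + \<alpha>\<^sup>2)) * cos (\<delta> * t) \<partial>lborel) =
      (\<integral>s. (\<integral>t. F s t \<partial>lborel) \<partial>lborel)"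
    unfolding inner[symmetric] by (rule Fubini(2))
  moreover have "(\<integral>s. (\<integral>t. F s t \<partial>lborel) \<partial>lborel) =
      2 * \<alpha> * y * BesselK1 (\<alpha> * sqrt (\<delta>\<^sup>2 + y\<^sup>2)) / sqrt (\<delta>\<^sup>2 + y\<^sup>2)"
    using gauss[where d = \<delta>] bessel[of \<delta>] unfolding F_def by (simp add: has_bochner_integral_iff)
  ultimately show ?thesis
    by (simp add: has_bochner_integral_iff)
qed

lemma nig_pdf_shift:
  "nig_pdf \<alpha> \<beta> \<mu> \<delta> (\<mu> + y) = \<alpha> * \<delta> / pi * (BesselK1 (\<alpha> * sqrt (\<delta>\<^sup>2 + y\<^sup>2)) / sqrt (\<delta>\<^sup>2 + y\<^sup>2)) *
    exp (\<delta> * sqrt (\<alpha>\<^sup>2 - \<beta>\<^sup>2) + \<beta> * y)"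
  unfolding nig_pdf_def Let_def by simp

lemma has_bochner_integral_nig_pdf_mixture:
  fixes \<alpha> \<beta> \<mu> \<delta> y :: real
  assumes \<alpha>: "\<alpha> > 0" and \<delta>: "\<delta> > 0"
  shows "has_bochner_integral lborel
    (\<lambda>s. indicator {0<..} s * (\<alpha>\<^sup>2 * \<delta> * exp (\<delta> * sqrt (\<alpha>\<^sup>2 - \<beta>\<^sup>2) + \<beta> * y) / (4 * pi) *
      (exp (- s - \<alpha>\<^sup>2 * (\<delta>\<^sup>2 + y\<^sup>2) / 4 / s) / s\<^sup>2)))
    (nig_pdf \<alpha> \<beta> \<mu> \<delta> (\<mu> + y))"
proof -
  define M where "M = \<alpha>\<^sup>2 * \<delta> * exp (\<delta> * sqrt (\<alpha>\<^sup>2 - \<beta>\<^sup>2) + \<beta> * y) / (4 * pi)"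
  define B where "B = \<alpha>\<^sup>2 * (\<delta>\<^sup>2 + y\<^sup>2) / 4"
  define q where "q = sqrt (\<delta>\<^sup>2 + y\<^sup>2)"
  have B: "B > 0" and q: "q > 0"
    unfolding B_def q_def using \<alpha> \<delta> by (simp_all add: add_pos_nonneg)
  have "has_bochner_integral lborel (\<lambda>s. M * (indicator {0<..} s * (exp (- 1 * s - B / s) / s\<^sup>2)))
      (M * (2 * sqrt (1 / B) * BesselK1 (2 * sqrt (1 * B))))"
    using B by (intro has_bochner_integral_mult_right has_bochner_integral_BesselK1_kernel) simp
  moreover have "2 * sqrt (1 * B) = \<alpha> * q" "2 * sqrt (1 / B) = 4 / (\<alpha> * q)"
    unfolding B_def q_def using \<alpha> by (simp_all add: real_sqrt_mult real_sqrt_divide)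
  moreover have "M * (4 / (\<alpha> * q) * BesselK1 (\<alpha> * q)) = nig_pdf \<alpha> \<beta> \<mu> \<delta> (\<mu> + y)"
    unfolding nig_pdf_shift M_def q_def[symmetric] using \<alpha> q by (simp add: field_simps power2_eq_square)
  moreover have "(\<lambda>s. M * (indicator {0<..} s * (exp (- 1 * s - B / s) / s\<^sup>2))) =
      (\<lambda>s. indicator {0<..} s * (M * (exp (- s - \<alpha>\<^sup>2 * (\<delta>\<^sup>2 + y\<^sup>2) / 4 / s) / s\<^sup>2)))"
    unfolding B_def by (simp add: fun_eq_iff)
  ultimately show ?thesis
    unfolding M_def by (simp only:)
qed

lemma has_bochner_integral_nig_pdf_mixture_gaussian:
  fixes \<alpha> \<beta> \<delta> s :: real
  assumes \<alpha>: "\<alpha> > 0" and s: "s > 0"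
  shows "has_bochner_integral lborel
    (\<lambda>y. \<alpha>\<^sup>2 * \<delta> * exp (\<delta> * sqrt (\<alpha>\<^sup>2 - \<beta>\<^sup>2) + \<beta> * y) / (4 * pi) *
      (exp (- s - \<alpha>\<^sup>2 * (\<delta>\<^sup>2 + y\<^sup>2) / 4 / s) / s\<^sup>2))
    (\<alpha>\<^sup>2 * \<delta> * exp (\<delta> * sqrt (\<alpha>\<^sup>2 - \<beta>\<^sup>2)) / (4 * pi) * (2 * sqrt pi / \<alpha>) *
      (exp (- ((\<alpha>\<^sup>2 - \<beta>\<^sup>2) / \<alpha>\<^sup>2) * s - \<alpha>\<^sup>2 * \<delta>\<^sup>2 / 4 / s) / (s * sqrt s)))"
proof -
  define K where "K = \<alpha>\<^sup>2 * \<delta> * exp (\<delta> * sqrt (\<alpha>\<^sup>2 - \<beta>\<^sup>2)) / (4 * pi)"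
  define b where "b = \<alpha>\<^sup>2 * \<delta>\<^sup>2 / 4"
  define c where "c = \<alpha>\<^sup>2 / (4 * s)"
  have c: "c > 0"
    using s \<alpha> by (simp add: c_def)
  define m where "m = K * (exp (- s - b / s) / s\<^sup>2)"
  have "\<alpha>\<^sup>2 * \<delta> * exp (\<delta> * sqrt (\<alpha>\<^sup>2 - \<beta>\<^sup>2) + \<beta> * y) / (4 * pi) *
      (exp (- s - \<alpha>\<^sup>2 * (\<delta>\<^sup>2 + y\<^sup>2) / 4 / s) / s\<^sup>2) = m * exp (\<beta> * y - c * y\<^sup>2)" for y
  proof -
    have "- s - \<alpha>\<^sup>2 * (\<delta>\<^sup>2 + y\<^sup>2) / 4 / s = (- s - b / s) + (- c * y\<^sup>2)"
      unfolding b_def c_def using s by (simp add: field_simps)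
    then have "exp (\<delta> * sqrt (\<alpha>\<^sup>2 - \<beta>\<^sup>2) + \<beta> * y) * exp (- s - \<alpha>\<^sup>2 * (\<delta>\<^sup>2 + y\<^sup>2) / 4 / s) =
        exp (\<delta> * sqrt (\<alpha>\<^sup>2 - \<beta>\<^sup>2)) * (exp (- s - b / s) * exp (\<beta> * y - c * y\<^sup>2))"
      by (simp add: exp_add[symmetric])
    then show ?thesis
      unfolding m_def K_def by (simp add: field_simps)
  qed
  moreover have "has_bochner_integral lborel (\<lambda>y. m * exp (\<beta> * y - c * y\<^sup>2))
      (m * (sqrt (pi / c) * exp (\<beta>\<^sup>2 / (4 * c))))"
    by (intro has_bochner_integral_mult_right has_bochner_integral_gaussian c)
  moreover have "m * (sqrt (pi / c) * exp (\<beta>\<^sup>2 / (4 * c))) =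
      K * (2 * sqrt pi / \<alpha>) * (exp (- ((\<alpha>\<^sup>2 - \<beta>\<^sup>2) / \<alpha>\<^sup>2) * s - b / s) / (s * sqrt s))"
  proof -
    have sqrt_c: "sqrt (pi / c) = 2 * sqrt pi * sqrt s / \<alpha>"
      unfolding c_def using s \<alpha> by (simp add: real_sqrt_divide real_sqrt_mult)
    have "- s - b / s + \<beta>\<^sup>2 / (4 * c) = - ((\<alpha>\<^sup>2 - \<beta>\<^sup>2) / \<alpha>\<^sup>2) * s - b / s"
      unfolding c_def using \<alpha> s by (simp add: field_simps)
    then have exponent: "exp (- s - b / s) * exp (\<beta>\<^sup>2 / (4 * c)) = exp (- ((\<alpha>\<^sup>2 - \<beta>\<^sup>2) / \<alpha>\<^sup>2) * s - b / s)"
      by (simp add: exp_add[symmetric])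
    have "s\<^sup>2 = s * sqrt s * sqrt s"
      using s by (simp add: power2_eq_square mult.assoc)
    then have power: "sqrt s / s\<^sup>2 = 1 / (s * sqrt s)"
      using s by simp
    have "m * (sqrt (pi / c) * exp (\<beta>\<^sup>2 / (4 * c))) =
        K * (2 * sqrt pi / \<alpha>) * ((exp (- s - b / s) * exp (\<beta>\<^sup>2 / (4 * c))) * (sqrt s / s\<^sup>2))"
      unfolding m_def sqrt_c by (simp add: field_simps)
    also have "\<dots> = K * (2 * sqrt pi / \<alpha>) * (exp (- ((\<alpha>\<^sup>2 - \<beta>\<^sup>2) / \<alpha>\<^sup>2) * s - b / s) / (s * sqrt s))"
      unfolding exponent power by simp
    finally show ?thesis .
  qed
  ultimately show ?thesis
    unfolding K_def b_def by simp
qed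

lemma has_bochner_integral_nig_mixing_density:
  fixes \<alpha> \<beta> \<delta> :: real
  assumes \<alpha>: "\<alpha> > 0" and \<beta>: "\<bar>\<beta>\<bar> < \<alpha>" and \<delta>: "\<delta> > 0"
  shows "has_bochner_integral lborel
    (\<lambda>s. indicator {0<..} s * (\<alpha>\<^sup>2 * \<delta> * exp (\<delta> * sqrt (\<alpha>\<^sup>2 - \<beta>\<^sup>2)) / (4 * pi) * (2 * sqrt pi / \<alpha>) *
      (exp (- ((\<alpha>\<^sup>2 - \<beta>\<^sup>2) / \<alpha>\<^sup>2) * s - \<alpha>\<^sup>2 * \<delta>\<^sup>2 / 4 / s) / (s * sqrt s)))) 1"
proof -
  define \<gamma> where "\<gamma> = sqrt (\<alpha>\<^sup>2 - \<beta>\<^sup>2)"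
  have "\<beta>\<^sup>2 < \<alpha>\<^sup>2"
    using \<beta> by (metis abs_ge_zero abs_of_pos power2_abs power_strict_mono \<alpha> zero_less_numeral)
  then have \<gamma>: "\<gamma> > 0" "\<gamma>\<^sup>2 = \<alpha>\<^sup>2 - \<beta>\<^sup>2"
    by (auto simp: \<gamma>_def)
  define K where "K = \<alpha>\<^sup>2 * \<delta> * exp (\<delta> * \<gamma>) / (4 * pi)"
  define a where "a = (\<alpha>\<^sup>2 - \<beta>\<^sup>2) / \<alpha>\<^sup>2"
  define b where "b = \<alpha>\<^sup>2 * \<delta>\<^sup>2 / 4"
  have a: "a > 0" and b: "b > 0"
    using \<open>\<beta>\<^sup>2 < \<alpha>\<^sup>2\<close> \<alpha> \<delta> unfolding a_def b_def by simp_all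
  have levy: "has_bochner_integral lborel
      (\<lambda>s. indicator {0<..} s * (K * (2 * sqrt pi / \<alpha>) * (exp (- a * s - b / s) / (s * sqrt s))))
      (K * (2 * sqrt pi / \<alpha>) * (sqrt (pi / b) * exp (- 2 * sqrt (a * b))))"
    using has_bochner_integral_mult_right[OF has_bochner_integral_levy_kernel[OF a b], of "K * (2 * sqrt pi / \<alpha>)"]
    by (simp add: mult_ac)
  have total: "K * (2 * sqrt pi / \<alpha>) * (sqrt (pi / b) * exp (- 2 * sqrt (a * b))) = 1"
  proof -
    have sqrt_b: "sqrt (pi / b) = 2 * sqrt pi / (\<alpha> * \<delta>)"
      unfolding b_def using \<alpha> \<delta> by (simp add: real_sqrt_divide real_sqrt_mult)
    have "a * b = (\<gamma> * \<delta> / 2)\<^sup>2"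
      unfolding a_def b_def \<gamma>(2)[symmetric] using \<alpha> by (simp add: field_simps power2_eq_square)
    then have "2 * sqrt (a * b) = \<delta> * \<gamma>"
      using \<gamma> \<delta> by simp
    then have exponent: "exp (- 2 * sqrt (a * b)) = exp (- (\<delta> * \<gamma>))"
      by simp
    have sqrt_pi_twice: "sqrt pi * (sqrt pi * r) = pi * r" for r
      by (simp add: mult.assoc[symmetric])
    have "K * (2 * sqrt pi / \<alpha>) * (sqrt (pi / b) * exp (- 2 * sqrt (a * b))) =
        \<alpha>\<^sup>2 * \<delta> / (4 * pi) * (2 / \<alpha>) * (2 / (\<alpha> * \<delta>)) * (sqrt pi * sqrt pi) *
        (exp (\<delta> * \<gamma>) * exp (- (\<delta> * \<gamma>)))"
      unfolding sqrt_b exponent K_def using \<alpha> \<delta> by (simp add: field_simps sqrt_pi_twice)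
    also have "\<dots> = 1"
      using \<alpha> \<delta> by (simp add: exp_minus field_simps power2_eq_square)
    finally show ?thesis .
  qed
  show ?thesis
    using levy unfolding total unfolding K_def a_def b_def \<gamma>_def .
qed

lemma has_bochner_integral_nig_pdf:
  fixes \<alpha> \<beta> \<mu> \<delta> :: real
  assumes \<alpha>: "\<alpha> > 0" and \<beta>: "\<bar>\<beta>\<bar> < \<alpha>" and \<delta>: "\<delta> > 0"
  shows "has_bochner_integral lborel (nig_pdf \<alpha> \<beta> \<mu> \<delta>) 1"
proof -
  define F where "F s y = indicator {0<..} s * (\<alpha>\<^sup>2 * \<delta> * exp (\<delta> * sqrt (\<alpha>\<^sup>2 - \<beta>\<^sup>2) + \<beta> * y) / (4 * pi) *
      (exp (- s - \<alpha>\<^sup>2 * (\<delta>\<^sup>2 + y\<^sup>2) / 4 / s) / s\<^sup>2))" for s y :: real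
  define G where "G s = indicator {0<..} s * (\<alpha>\<^sup>2 * \<delta> * exp (\<delta> * sqrt (\<alpha>\<^sup>2 - \<beta>\<^sup>2)) / (4 * pi) *
      (2 * sqrt pi / \<alpha>) * (exp (- ((\<alpha>\<^sup>2 - \<beta>\<^sup>2) / \<alpha>\<^sup>2) * s - \<alpha>\<^sup>2 * \<delta>\<^sup>2 / 4 / s) / (s * sqrt s)))"
    for s :: real
  have F_y: "has_bochner_integral lborel (F s) (G s)" for s
    using has_bochner_integral_nig_pdf_mixture_gaussian[OF \<alpha>, of s \<delta> \<beta>]
    unfolding F_def[abs_def] G_def by (cases "s > 0") (simp_all add: has_bochner_integral_zero)
  have G: "has_bochner_integral lborel G 1"
    unfolding G_def[abs_def] using \<alpha> \<beta> \<delta> by (rule has_bochner_integral_nig_mixing_density)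
  have mF: "(\<lambda>(s, y). F s y) \<in> borel_measurable (lborel \<Otimes>\<^sub>M lborel)"
    unfolding F_def by measurable
  have F_nonneg: "F s y \<ge> 0" for s y
    unfolding F_def using \<alpha> \<delta> by (auto simp: indicator_def)
  note Fubini = Fubini_dominated_lborel[OF mF mF _ F_y integrable.intros[OF G]]
  have F_s: "(\<integral>s. F s y \<partial>lborel) = nig_pdf \<alpha> \<beta> \<mu> \<delta> (\<mu> + y)" for y
    using has_bochner_integral_nig_pdf_mixture[OF \<alpha> \<delta>, of \<beta> y \<mu>]
    unfolding F_def by (simp add: has_bochner_integral_iff)
  have "integrable lborel (\<lambda>y. nig_pdf \<alpha> \<beta> \<mu> \<delta> (\<mu> + y))"
    using lborel_pair.integrable_snd[OF Fubini(1)] F_nonneg unfolding F_s by simp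
  moreover have "(\<integral>y. nig_pdf \<alpha> \<beta> \<mu> \<delta> (\<mu> + y) \<partial>lborel) = 1"
    using Fubini(2) F_nonneg F_y G unfolding F_s by (simp add: has_bochner_integral_iff)
  ultimately have "has_bochner_integral lborel (\<lambda>y. nig_pdf \<alpha> \<beta> \<mu> \<delta> (\<mu> + 1 * y)) 1"
    by (simp add: has_bochner_integral_iff)
  then show ?thesis
    using lborel_has_bochner_integral_real_affine_iff[where c = 1 and t = \<mu> and f = "nig_pdf \<alpha> \<beta> \<mu> \<delta>" and x = 1]
    by simp
qed

lemma nig_cdf_eq_one_minus_tail:
  fixes \<alpha> \<beta> \<mu> \<delta> x :: real
  assumes \<beta>: "\<bar>\<beta>\<bar> < \<alpha>" and \<delta>: "\<delta> > 0"
  shows "nig_cdf \<alpha> \<beta> \<mu> \<delta> x = 1 - (\<integral>u. indicator {x - \<mu><..} u * nig_pdf \<alpha> \<beta> \<mu> \<delta> (\<mu> + u) \<partial>lborel)"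
proof -
  define f where "f = nig_pdf \<alpha> \<beta> \<mu> \<delta>"
  have "\<alpha> > 0"
    using \<beta> by linarith
  then have f: "has_bochner_integral lborel f 1"
    unfolding f_def using \<beta> \<delta> by (rule has_bochner_integral_nig_pdf)
  then have int: "integrable lborel f"
    by (rule integrable.intros)
  have "1 = integral\<^sup>L lborel f"
    using f by (simp add: has_bochner_integral_iff)
  also have "\<dots> = integral\<^sup>L lborel (\<lambda>t. indicator {..x} t * f t + indicator {x<..} t * f t)"
    by (intro Bochner_Integration.integral_cong) (auto simp: indicator_def)
  also have "\<dots> = integral\<^sup>L lborel (\<lambda>t. indicator {..x} t * f t) + integral\<^sup>L lborel (\<lambda>t. indicator {x<..} t * f t)"
    using integrable_mult_indicator[of "{..x}" lborel f] integrable_mult_indicator[of "{x<..}" lborel f] int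
    by simp
  finally have "nig_cdf \<alpha> \<beta> \<mu> \<delta> x = 1 - integral\<^sup>L lborel (\<lambda>t. indicator {x<..} t * f t)"
    unfolding nig_cdf_def set_lebesgue_integral_def f_def by simp
  also have "integral\<^sup>L lborel (\<lambda>t. indicator {x<..} t * f t) =
      (\<integral>u. indicator {x<..} (\<mu> + 1 * u) * f (\<mu> + 1 * u) \<partial>lborel)"
    using lborel_integral_real_affine[of 1 "\<lambda>t. indicator {x<..} t * f t" \<mu>] by simp
  also have "\<dots> = (\<integral>u. indicator {x - \<mu><..} u * f (\<mu> + u) \<partial>lborel)"
    by (intro Bochner_Integration.integral_cong) (auto simp: indicator_def)
  finally show ?thesis
    unfolding f_def .
qed

lemma has_bochner_integral_nig_pdf_cos:
  fixes \<alpha> \<beta> \<mu> \<delta> u :: real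
  assumes \<alpha>: "\<alpha> > 0" and u: "u > 0"
  shows "has_bochner_integral lborel
    (\<lambda>t. \<delta> * exp (\<delta> * sqrt (\<alpha>\<^sup>2 - \<beta>\<^sup>2)) / (2 * pi) * (exp (- u * (sqrt (t\<^sup>2 + \<alpha>\<^sup>2) - \<beta>)) / u * cos (\<delta> * t)))
    (nig_pdf \<alpha> \<beta> \<mu> \<delta> (\<mu> + u))"
proof -
  define C where "C = \<delta> * exp (\<delta> * sqrt (\<alpha>\<^sup>2 - \<beta>\<^sup>2)) / (2 * pi)"
  define q where "q = sqrt (\<delta>\<^sup>2 + u\<^sup>2)"
  have q: "q > 0"
    unfolding q_def using u by (simp add: add_nonneg_pos)
  have "has_bochner_integral lborel
      (\<lambda>t. C * exp (\<beta> * u) / u * (exp (- u * sqrt (t\<^sup>2 + \<alpha>\<^sup>2)) * cos (\<delta> * t)))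
      (C * exp (\<beta> * u) / u * (2 * \<alpha> * u * BesselK1 (\<alpha> * q) / q))"
    unfolding q_def by (intro has_bochner_integral_mult_right has_bochner_integral_exp_sqrt_cos \<alpha> u)
  moreover have "(\<lambda>t. C * exp (\<beta> * u) / u * (exp (- u * sqrt (t\<^sup>2 + \<alpha>\<^sup>2)) * cos (\<delta> * t))) =
      (\<lambda>t. C * (exp (- u * (sqrt (t\<^sup>2 + \<alpha>\<^sup>2) - \<beta>)) / u * cos (\<delta> * t)))"
    by (simp add: fun_eq_iff exp_add[symmetric] algebra_simps)
  moreover have "C * exp (\<beta> * u) / u * (2 * \<alpha> * u * BesselK1 (\<alpha> * q) / q) = nig_pdf \<alpha> \<beta> \<mu> \<delta> (\<mu> + u)"
    unfolding nig_pdf_shift C_def q_def[symmetric] using u q by (simp add: exp_add field_simps)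
  ultimately show ?thesis
    unfolding C_def by (simp only:)
qed

lemma sqrt_add_square_minus_ge:
  fixes \<alpha> \<beta> t :: real
  assumes \<beta>: "\<bar>\<beta>\<bar> < \<alpha>"
  shows "(\<alpha> - \<bar>\<beta>\<bar>) / \<alpha> * sqrt (t\<^sup>2 + \<alpha>\<^sup>2) \<le> sqrt (t\<^sup>2 + \<alpha>\<^sup>2) - \<beta>"
proof -
  have \<alpha>: "\<alpha> > 0"
    using \<beta> by linarith
  then have "\<alpha> \<le> sqrt (t\<^sup>2 + \<alpha>\<^sup>2)"
    by (metis abs_of_pos le_add_same_cancel2 real_sqrt_abs real_sqrt_le_mono zero_le_power2)
  then have "\<bar>\<beta>\<bar> \<le> \<bar>\<beta>\<bar> / \<alpha> * sqrt (t\<^sup>2 + \<alpha>\<^sup>2)"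
    using \<alpha> mult_left_mono[of \<alpha> "sqrt (t\<^sup>2 + \<alpha>\<^sup>2)" "\<bar>\<beta>\<bar> / \<alpha>"] by simp
  moreover have "(\<alpha> - \<bar>\<beta>\<bar>) / \<alpha> * sqrt (t\<^sup>2 + \<alpha>\<^sup>2) = sqrt (t\<^sup>2 + \<alpha>\<^sup>2) - \<bar>\<beta>\<bar> / \<alpha> * sqrt (t\<^sup>2 + \<alpha>\<^sup>2)"
    using \<alpha> by (simp add: field_simps)
  ultimately show ?thesis
    by linarith
qed

lemma nig_tail_kernel_bound:
  fixes \<alpha> \<beta> y0 u t :: real
  assumes \<beta>: "\<bar>\<beta>\<bar> < \<alpha>" and y0: "0 < y0" "y0 < u"
  shows "exp (- u * (sqrt (t\<^sup>2 + \<alpha>\<^sup>2) - \<beta>)) / u \<le>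
    exp (- (u - y0) * (\<alpha> - \<bar>\<beta>\<bar>)) / y0 * exp (- (y0 * ((\<alpha> - \<bar>\<beta>\<bar>) / \<alpha>)) * sqrt (t\<^sup>2 + \<alpha>\<^sup>2))"
proof -
  define s where "s = sqrt (t\<^sup>2 + \<alpha>\<^sup>2)"
  define \<kappa> where "\<kappa> = (\<alpha> - \<bar>\<beta>\<bar>) / \<alpha>"
  have \<alpha>: "\<alpha> > 0" and \<kappa>: "\<kappa> > 0"
    using \<beta> by (auto simp: \<kappa>_def)
  have "\<alpha> \<le> s"
    unfolding s_def using \<alpha> by (metis abs_of_pos le_add_same_cancel2 real_sqrt_abs real_sqrt_le_mono zero_le_power2)
  have "u * (\<kappa> * s) \<le> u * (s - \<beta>)"
    using sqrt_add_square_minus_ge[OF \<beta>, of t] y0 unfolding s_def \<kappa>_def by (intro mult_left_mono) auto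
  moreover have "(u - y0) * (\<kappa> * \<alpha>) \<le> (u - y0) * (\<kappa> * s)"
    using y0 \<kappa> \<open>\<alpha> \<le> s\<close> by (intro mult_left_mono) auto
  moreover have "u * (\<kappa> * s) = (u - y0) * (\<kappa> * s) + y0 * \<kappa> * s"
    by (simp add: algebra_simps)
  ultimately have "(u - y0) * (\<kappa> * \<alpha>) + y0 * \<kappa> * s \<le> u * (s - \<beta>)"
    by linarith
  then have "exp (- u * (s - \<beta>)) \<le> exp (- (u - y0) * (\<kappa> * \<alpha>) + - y0 * \<kappa> * s)"
    by (simp only: exp_le_cancel_iff mult_minus_left)
  also have "\<dots> = exp (- (u - y0) * (\<alpha> - \<bar>\<beta>\<bar>)) * exp (- y0 * \<kappa> * s)"
    using \<alpha> unfolding exp_add by (simp add: \<kappa>_def)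
  finally have "exp (- u * (s - \<beta>)) \<le> exp (- (u - y0) * (\<alpha> - \<bar>\<beta>\<bar>)) * exp (- y0 * \<kappa> * s)" .
  then have "exp (- u * (s - \<beta>)) / u \<le> exp (- (u - y0) * (\<alpha> - \<bar>\<beta>\<bar>)) * exp (- y0 * \<kappa> * s) / u"
    using y0 by (simp add: divide_right_mono)
  also have "\<dots> \<le> exp (- (u - y0) * (\<alpha> - \<bar>\<beta>\<bar>)) * exp (- y0 * \<kappa> * s) / y0"
    using y0 by (intro divide_left_mono) auto
  finally show ?thesis
    unfolding s_def \<kappa>_def by simp
qed

lemma integrable_nig_tail_kernel:
  fixes \<alpha> \<beta> \<delta> y0 :: real
  assumes \<beta>: "\<bar>\<beta>\<bar> < \<alpha>" and y0: "y0 > 0"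
  shows "integrable (lborel \<Otimes>\<^sub>M lborel)
    (\<lambda>(u, t). indicator {y0<..} u * (exp (- u * (sqrt (t\<^sup>2 + \<alpha>\<^sup>2) - \<beta>)) / u * cos (\<delta> * t)))"
proof -
  have \<alpha>: "\<alpha> > 0"
    using \<beta> by linarith
  define \<kappa> where "\<kappa> = (\<alpha> - \<bar>\<beta>\<bar>) / \<alpha>"
  have \<kappa>: "\<kappa> > 0"
    using \<beta> \<alpha> by (simp add: \<kappa>_def)
  define F where "F u t = indicator {y0<..} u * (exp (- u * (sqrt (t\<^sup>2 + \<alpha>\<^sup>2) - \<beta>)) / u * cos (\<delta> * t))"
    for u t :: real
  define g where "g u = indicator {y0<..} u * (exp (- (u - y0) * (\<alpha> - \<bar>\<beta>\<bar>)) / y0)" for u :: real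
  define H where "H u t = g u * (exp (- (y0 * \<kappa>) * sqrt (t\<^sup>2 + \<alpha>\<^sup>2)) * cos (0 * t))" for u t :: real
  define I where "I = 2 * \<alpha> * (y0 * \<kappa>) * BesselK1 (\<alpha> * sqrt (0\<^sup>2 + (y0 * \<kappa>)\<^sup>2)) / sqrt (0\<^sup>2 + (y0 * \<kappa>)\<^sup>2)"
  have mF: "(\<lambda>(u, t). F u t) \<in> borel_measurable (lborel \<Otimes>\<^sub>M lborel)"
    unfolding F_def by measurable
  have mH: "(\<lambda>(u, t). H u t) \<in> borel_measurable (lborel \<Otimes>\<^sub>M lborel)"
    unfolding H_def g_def by measurable
  have bound: "\<bar>F u t\<bar> \<le> H u t" for u t
  proof (cases "u > y0")
    case True
    have "\<bar>F u t\<bar> = exp (- u * (sqrt (t\<^sup>2 + \<alpha>\<^sup>2) - \<beta>)) / u * \<bar>cos (\<delta> * t)\<bar>"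
      unfolding F_def using True y0 by (simp add: abs_mult)
    also have "\<dots> \<le> exp (- u * (sqrt (t\<^sup>2 + \<alpha>\<^sup>2) - \<beta>)) / u"
      using True y0 by (intro mult_left_le) auto
    also have "\<dots> \<le> H u t"
      using nig_tail_kernel_bound[OF \<beta> y0 True, of t] True unfolding H_def g_def \<kappa>_def by simp
    finally show ?thesis .
  qed (simp add: F_def H_def g_def)
  have H_int: "has_bochner_integral lborel (H u) (g u * I)" for u
    unfolding H_def[abs_def] I_def using y0 \<kappa>
    by (intro has_bochner_integral_mult_right has_bochner_integral_exp_sqrt_cos \<alpha>) simp
  have "integrable lborel g"
  proof (rule Bochner_Integration.integrable_bound)
    show "integrable lborel (\<lambda>u. exp (y0 * (\<alpha> - \<bar>\<beta>\<bar>)) / y0 * (indicator {y0..} u * exp (- (\<alpha> - \<bar>\<beta>\<bar>) * u)))"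
      using has_bochner_integral_exp_half_line[of "\<alpha> - \<bar>\<beta>\<bar>" y0] \<beta>
      by (intro integrable_mult_right) (simp add: has_bochner_integral_iff)
    show "g \<in> borel_measurable lborel"
      unfolding g_def by measurable
    have "exp (- (u - y0) * (\<alpha> - \<bar>\<beta>\<bar>)) = exp (y0 * (\<alpha> - \<bar>\<beta>\<bar>)) * exp (- (\<alpha> - \<bar>\<beta>\<bar>) * u)" for u
      by (simp add: exp_add[symmetric] algebra_simps)
    then show "AE u in lborel. norm (g u) \<le>
        norm (exp (y0 * (\<alpha> - \<bar>\<beta>\<bar>)) / y0 * (indicator {y0..} u * exp (- (\<alpha> - \<bar>\<beta>\<bar>) * u)))"
      using y0 by (intro AE_I2) (simp add: g_def indicator_def)
  qed
  then have "integrable lborel (\<lambda>u. g u * I)"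
    by simp
  from Fubini_dominated_lborel(1)[OF mF mH bound H_int this] show ?thesis
    unfolding F_def .
qed

lemma nig_tail_integral:
  fixes \<alpha> \<beta> \<mu> \<delta> y0 :: real
  assumes \<beta>: "\<bar>\<beta>\<bar> < \<alpha>" and \<delta>: "\<delta> > 0" and y0: "y0 > 0"
  shows "integrable lborel (\<lambda>t. expint_E1 (y0 * (sqrt (t\<^sup>2 + \<alpha>\<^sup>2) - \<beta>)) * cos (\<delta> * t))"
    and "(\<integral>u. indicator {y0<..} u * nig_pdf \<alpha> \<beta> \<mu> \<delta> (\<mu> + u) \<partial>lborel) =
      \<delta> * exp (\<delta> * sqrt (\<alpha>\<^sup>2 - \<beta>\<^sup>2)) / (2 * pi) *
      (\<integral>t. expint_E1 (y0 * (sqrt (t\<^sup>2 + \<alpha>\<^sup>2) - \<beta>)) * cos (\<delta> * t) \<partial>lborel)"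
proof -
  have \<alpha>: "\<alpha> > 0"
    using \<beta> by linarith
  define C where "C = \<delta> * exp (\<delta> * sqrt (\<alpha>\<^sup>2 - \<beta>\<^sup>2)) / (2 * pi)"
  have C: "C > 0"
    using \<delta> by (simp add: C_def)
  define h where "h t = sqrt (t\<^sup>2 + \<alpha>\<^sup>2) - \<beta>" for t :: real
  have h_pos: "h t > 0" for t
  proof -
    have "0 < (\<alpha> - \<bar>\<beta>\<bar>) / \<alpha> * sqrt (t\<^sup>2 + \<alpha>\<^sup>2)"
      using \<beta> \<alpha> by (simp add: add_nonneg_pos)
    then show ?thesis
      using sqrt_add_square_minus_ge[OF \<beta>, of t] unfolding h_def by linarith
  qed
  define F where "F u t = indicator {y0<..} u * (exp (- u * h t) / u * cos (\<delta> * t))" for u t :: real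
  have int: "integrable (lborel \<Otimes>\<^sub>M lborel) (\<lambda>(u, t). F u t)"
    unfolding F_def h_def by (rule integrable_nig_tail_kernel[OF \<beta> y0])
  have F_t: "(\<integral>t. F u t \<partial>lborel) = indicator {y0<..} u * nig_pdf \<alpha> \<beta> \<mu> \<delta> (\<mu> + u) / C" for u
  proof (cases "u > y0")
    case True
    have "C * (\<integral>t. exp (- u * h t) / u * cos (\<delta> * t) \<partial>lborel) = nig_pdf \<alpha> \<beta> \<mu> \<delta> (\<mu> + u)"
      using has_bochner_integral_nig_pdf_cos[OF \<alpha>, of u \<delta> \<beta> \<mu>] True y0
      unfolding h_def C_def by (simp add: has_bochner_integral_iff)
    then show ?thesis
      unfolding F_def using True C by (simp add: field_simps)
  qed (simp add: F_def)
  have F_u: "(\<integral>u. F u t \<partial>lborel) = expint_E1 (y0 * h t) * cos (\<delta> * t)" for t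
  proof -
    have "has_bochner_integral lborel (\<lambda>u. cos (\<delta> * t) * (indicator {y0<..} u * (exp (- u * h t) / u)))
        (cos (\<delta> * t) * expint_E1 (y0 * h t))"
      by (intro has_bochner_integral_mult_right has_bochner_integral_expint_E1 y0 h_pos)
    then show ?thesis
      unfolding F_def by (simp add: has_bochner_integral_iff mult_ac)
  qed
  show "integrable lborel (\<lambda>t. expint_E1 (y0 * (sqrt (t\<^sup>2 + \<alpha>\<^sup>2) - \<beta>)) * cos (\<delta> * t))"
    using lborel_pair.integrable_snd[OF int] unfolding F_u h_def .
  have "(\<integral>u. indicator {y0<..} u * nig_pdf \<alpha> \<beta> \<mu> \<delta> (\<mu> + u) \<partial>lborel) / C =
      (\<integral>t. expint_E1 (y0 * h t) * cos (\<delta> * t) \<partial>lborel)"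
    using lborel_pair.Fubini_integral[OF int] unfolding F_t F_u by simp
  then have "(\<integral>u. indicator {y0<..} u * nig_pdf \<alpha> \<beta> \<mu> \<delta> (\<mu> + u) \<partial>lborel) =
      C * (\<integral>t. expint_E1 (y0 * h t) * cos (\<delta> * t) \<partial>lborel)"
    using C by (simp add: divide_eq_eq ac_simps)
  then show "(\<integral>u. indicator {y0<..} u * nig_pdf \<alpha> \<beta> \<mu> \<delta> (\<mu> + u) \<partial>lborel) =
      \<delta> * exp (\<delta> * sqrt (\<alpha>\<^sup>2 - \<beta>\<^sup>2)) / (2 * pi) *
      (\<integral>t. expint_E1 (y0 * (sqrt (t\<^sup>2 + \<alpha>\<^sup>2) - \<beta>)) * cos (\<delta> * t) \<partial>lborel)"
    unfolding C_def h_def .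
qed

theorem proposition3:
  fixes \<alpha> \<beta> \<mu> \<delta> x :: real
  assumes "\<alpha> > 0" and "\<bar>\<beta>\<bar> < \<alpha>" and "\<delta> > 0" and "x - \<mu> > 0"
  shows "nig_cdf \<alpha> \<beta> \<mu> \<delta> x =
    1 - \<delta> * exp (\<delta> * sqrt (\<alpha>\<^sup>2 - \<beta>\<^sup>2)) / pi *
      (LBINT t:{0..}. expint_E1 ((x - \<mu>) * (sqrt (t\<^sup>2 + \<alpha>\<^sup>2) - \<beta>)) * cos (\<delta> * t))"
proof -
  note tail = nig_tail_integral[OF assms(2-4)]
  have "(\<integral>t. expint_E1 ((x - \<mu>) * (sqrt (t\<^sup>2 + \<alpha>\<^sup>2) - \<beta>)) * cos (\<delta> * t) \<partial>lborel) =
      2 * (LBINT t:{0..}. expint_E1 ((x - \<mu>) * (sqrt (t\<^sup>2 + \<alpha>\<^sup>2) - \<beta>)) * cos (\<delta> * t))"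
    using has_bochner_integral_half_line_even[OF tail(1)]
    by (simp add: set_lebesgue_integral_def has_bochner_integral_iff)
  then show ?thesis
    unfolding nig_cdf_eq_one_minus_tail[OF assms(2,3)] tail(2) by simp
qed

end
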